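(* Let $\alpha_1,c_1>0$ and let $\{\lambda_n\}_{n\in\mathbb{N}^*}$ be a sequence of positive real numbers with $\lambda_n/(c_1n^{-\alpha_1})\to1$ as $n\to\infty$. Then \[ \sup_{N\in\mathbb{N}^*}\left\{2^{-m/N}\left[\prod_{n=1}^N\lambda_n\right]^{1/N}\right\}=c_1\left(\frac{\alpha_1}{\ln 2}\right)^{\alpha_1}m^{-\alpha_1}+o_{m\to\infty}(m^{-\alpha_1}). \]
   Context: $\mathbb{N}^*$ denotes the positive integers, $\ln$ the natural logarithm; $f=o_{m\to\infty}(g)$ means $f(m)/g(m)\to0$. *)

theory Defs
  imports "HOL-Analysis.Analysis" "HOL-Library.Landau_Symbols"
begin

definition sup_geo :: "(nat \<Rightarrow> real) \<Rightarrow> nat \<Rightarrow> real" where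
  "sup_geo lam m = (SUP N\<in>{1..}. 2 powr (- real m / real N) * (\<Prod>n=1..N. lam n) powr (1 / real N))"

end

theory Submission
  imports Defs "HOL-Real_Asymp.Real_Asymp"
begin

(* Write lam n = c n^(-a) r n with r n --> 1. The geometric means G N = (prod_{n<=N} lam n)^(1/N)
   satisfy N^a G N --> c e^a: the factor e^a comes from ln N! = N ln N - N + o(N), and the r n
   only contribute a Cesaro mean of ln (r n) --> 0.
   Then m^a 2^(-m/N) G N = N^a G N * h (N/m) with h x = 2^(-1/x) x^(-a), whose maximum
   (a / ln 2)^a e^(-a) is attained at x = ln 2 / a. Choosing N close to m ln 2 / a gives the
   lower bound; for the upper bound, all N beyond some N0 are controlled by the maximum of h,
   and the finitely many N < N0 contribute O(2^(-m/N0)) = o(m^(-a)). *)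

lemma Cesaro_mean_tendsto:
  fixes x :: "nat \<Rightarrow> real"
  assumes "x \<longlonglongrightarrow> L"
  shows "(\<lambda>N. (\<Sum>n<N. x n) / real N) \<longlonglongrightarrow> L"
proof (rule LIMSEQ_I)
  fix r :: real assume "r > 0"
  then obtain N0 where N0: "\<And>n. n \<ge> N0 \<Longrightarrow> \<bar>x n - L\<bar> < r / 2"
    using LIMSEQ_D[OF assms, of "r / 2"] by auto
  define B where "B = (\<Sum>n<N0. \<bar>x n - L\<bar>)"
  show "\<exists>M. \<forall>N\<ge>M. norm ((\<Sum>n<N. x n) / real N - L) < r"
  proof (intro exI allI impI)
    fix N assume N: "N \<ge> nat \<lceil>2 * B / r\<rceil> + 1"
    then have "real N > 0" and "2 * B / r < real N" by linarith+
    have "\<bar>\<Sum>n<N. x n - L\<bar> \<le> (\<Sum>n<N. \<bar>x n - L\<bar>)" by (rule sum_abs)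
    also have "\<dots> \<le> (\<Sum>n<N. (if n < N0 then \<bar>x n - L\<bar> else 0) + r / 2)"
      using N0 \<open>r > 0\<close> by (intro sum_mono) (simp add: less_imp_le not_less)
    also have "\<dots> = (\<Sum>n\<in>{..<N} \<inter> {..<N0}. \<bar>x n - L\<bar>) + real N * (r / 2)"
      by (simp add: sum.distrib sum.inter_restrict)
    also have "(\<Sum>n\<in>{..<N} \<inter> {..<N0}. \<bar>x n - L\<bar>) \<le> B"
      unfolding B_def by (rule sum_mono2) auto
    also have "B < real N * (r / 2)"
      using \<open>2 * B / r < real N\<close> \<open>r > 0\<close> by (simp add: field_simps)
    finally have "\<bar>(\<Sum>n<N. x n) - real N * L\<bar> < r * real N"
      using \<open>r > 0\<close> \<open>real N > 0\<close> by (simp add: sum_subtractf)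
    then show "norm ((\<Sum>n<N. x n) / real N - L) < r"
      using \<open>real N > 0\<close> by (simp add: field_simps abs_less_iff)
  qed
qed

lemma mult_ln_minus_sum_ln_telescope:
  "real N * ln (real N) - (\<Sum>n=1..N. ln (real n)) = (\<Sum>k<N. real k * (ln (real k + 1) - ln (real k)))"
  by (induction N) (simp_all add: algebra_simps)

lemma ln_minus_mean_ln_tendsto:
  "(\<lambda>N. ln (real N) - (\<Sum>n=1..N. ln (real n)) / real N) \<longlonglongrightarrow> 1"
proof -
  have "(\<lambda>k. real k * (ln (real k + 1) - ln (real k))) \<longlonglongrightarrow> 1"
    by real_asymp
  then have "(\<lambda>N. (real N * ln (real N) - (\<Sum>n=1..N. ln (real n))) / real N) \<longlonglongrightarrow> 1"
    unfolding mult_ln_minus_sum_ln_telescope by (rule Cesaro_mean_tendsto)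
  then show ?thesis
    by (rule Lim_transform_eventually)
       (use eventually_gt_at_top[of 0] in \<open>eventually_elim, simp add: field_simps\<close>)
qed

lemma powr_mult_geometric_mean_tendsto:
  fixes a c :: real and lam :: "nat \<Rightarrow> real"
  assumes "c > 0" and lam_pos: "\<And>n. n \<ge> 1 \<Longrightarrow> lam n > 0"
    and "(\<lambda>n. lam n / (c * real n powr (- a))) \<longlonglongrightarrow> 1"
  shows "(\<lambda>N. real N powr a * (\<Prod>n=1..N. lam n) powr (1 / real N)) \<longlonglongrightarrow> c * exp a"
proof -
  define r where "r n = lam n / (c * real n powr (- a))" for n
  have ln_r: "(\<lambda>n. ln (r (Suc n))) \<longlonglongrightarrow> 0"
    using LIMSEQ_Suc[OF tendsto_ln[OF assms(3)]] by (simp add: r_def)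
  have mean_ln_r: "(\<lambda>N. (\<Sum>n=1..N. ln (r n)) / real N) \<longlonglongrightarrow> 0"
    using Cesaro_mean_tendsto[OF ln_r] by (simp add: sum.atLeast1_atMost_eq)
  have "(\<lambda>N. exp (ln c + a * (ln (real N) - (\<Sum>n=1..N. ln (real n)) / real N)
      + (\<Sum>n=1..N. ln (r n)) / real N)) \<longlonglongrightarrow> exp (ln c + a * 1 + 0)"
    by (intro tendsto_intros ln_minus_mean_ln_tendsto mean_ln_r)
  also have "exp (ln c + a * 1 + 0) = c * exp a"
    using \<open>c > 0\<close> by (simp add: exp_add)
  finally show ?thesis
  proof (rule Lim_transform_eventually)
    show "\<forall>\<^sub>F N in sequentially. exp (ln c + a * (ln (real N) - (\<Sum>n=1..N. ln (real n)) / real N)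
      + (\<Sum>n=1..N. ln (r n)) / real N) = real N powr a * (\<Prod>n=1..N. lam n) powr (1 / real N)"
      using eventually_gt_at_top[of 0]
    proof eventually_elim
      case (elim N)
      have lam_nz: "lam n \<noteq> 0" if "n \<in> {1..N}" for n
        using that lam_pos[of n] by simp
      have ln_lam: "ln (lam n) = ln c - a * ln (real n) + ln (r n)" if "n \<in> {1..N}" for n
        using that \<open>c > 0\<close> lam_pos[of n] by (simp add: r_def ln_div ln_mult ln_powr)
      have "ln (\<Prod>n=1..N. lam n) = (\<Sum>n=1..N. ln c - a * ln (real n) + ln (r n))"
        by (subst ln_prod) (auto intro: sum.cong simp: ln_lam lam_nz)
      then show ?case
        using elim lam_nz by (simp add: powr_def exp_add[symmetric] sum.distrib sum_subtractf
            sum_distrib_left[symmetric] field_simps)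
    qed
  qed
qed

definition decay_profile :: "real \<Rightarrow> real \<Rightarrow> real \<Rightarrow> real" where
  "decay_profile b a x = b powr (- 1 / x) * x powr (- a)"

lemma decay_profile_le:
  assumes "b > 1" "a > 0" "x > 0"
  shows "decay_profile b a x \<le> (a / ln b) powr a * exp (- a)"
proof -
  define u where "u = ln b / (a * x)"
  have "ln b > 0" "u > 0" using assms by (simp_all add: u_def)
  have "a * ln u \<le> a * (u - 1)"
    using ln_le_minus_one[OF \<open>u > 0\<close>] \<open>a > 0\<close> by (simp add: mult_left_mono)
  then have "- ln b / x - a * ln x \<le> a * ln (a / ln b) - a"
    using assms \<open>ln b > 0\<close> by (simp add: u_def ln_div ln_mult algebra_simps)
  then show ?thesis
    using assms \<open>ln b > 0\<close> by (simp add: decay_profile_def powr_def mult_exp_exp)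
qed

lemma decay_profile_at_maximum:
  assumes "b > 1" "a > 0"
  shows "decay_profile b a (ln b / a) = (a / ln b) powr a * exp (- a)"
  using assms by (simp add: decay_profile_def powr_def mult_exp_exp ln_div algebra_simps)

lemma powr_mult_decay_eq_decay_profile:
  assumes "m > 0" "N > 0"
  shows "m powr a * (b powr (- m / N) * g) = N powr a * g * decay_profile b a (N / m)"
  using assms by (simp add: decay_profile_def powr_divide powr_minus field_simps)

lemma nat_ceiling_mult_tendsto:
  fixes x :: real
  assumes "x > 0"
  shows "filterlim (\<lambda>m. nat \<lceil>real m * x\<rceil>) sequentially sequentially"
    and "(\<lambda>m. real (nat \<lceil>real m * x\<rceil>) / real m) \<longlonglongrightarrow> x"
proof -
  have "filterlim (\<lambda>m. real m * x) at_top sequentially"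
    using assms by real_asymp
  then show "filterlim (\<lambda>m. nat \<lceil>real m * x\<rceil>) sequentially sequentially"
    unfolding filterlim_sequentially_iff_filterlim_real
    by (rule filterlim_at_top_mono) (simp add: real_nat_ceiling_ge)
  show "(\<lambda>m. real (nat \<lceil>real m * x\<rceil>) / real m) \<longlonglongrightarrow> x"
  proof (rule tendsto_sandwich[of "\<lambda>m. x" _ _ "\<lambda>m. x + 1 / real m"])
    have bounds: "real m * x \<le> real (nat \<lceil>real m * x\<rceil>)" "real (nat \<lceil>real m * x\<rceil>) \<le> real m * x + 1"
      for m
      using assms by (simp_all add: real_nat_ceiling_ge)
    show "\<forall>\<^sub>F m in sequentially. x \<le> real (nat \<lceil>real m * x\<rceil>) / real m"
      using eventually_gt_at_top[of 0]
      by (rule eventually_mono) (use bounds(1) in \<open>simp add: field_simps\<close>)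
    show "\<forall>\<^sub>F m in sequentially. real (nat \<lceil>real m * x\<rceil>) / real m \<le> x + 1 / real m"
      using eventually_gt_at_top[of 0]
      by (rule eventually_mono) (use bounds(2) in \<open>simp add: field_simps\<close>)
    show "(\<lambda>m. x + 1 / real m) \<longlonglongrightarrow> x"
      by real_asymp
  qed simp
qed

lemma bdd_above_decay_terms:
  fixes G :: "nat \<Rightarrow> real"
  assumes "b \<ge> 1" "a \<ge> 0" "\<And>N. G N \<ge> 0" "convergent (\<lambda>N. real N powr a * G N)"
  shows "bdd_above ((\<lambda>N. b powr (- real m / real N) * G N) ` {1..})"
proof -
  obtain B where B: "\<And>N. \<bar>real N powr a * G N\<bar> \<le> B"
    using convergent_imp_Bseq[OF assms(4)] by (auto simp: Bseq_iff)
  have "b powr (- real m / real N) * G N \<le> B" if "N \<ge> 1" for N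
  proof -
    have "b powr (- real m / real N) * G N \<le> 1 * (real N powr a * G N)"
    proof (intro mult_mono)
      show "b powr (- real m / real N) \<le> 1"
        using assms(1) powr_mono[of "- real m / real N" 0 b] by simp
      show "G N \<le> real N powr a * G N"
        using that assms(2,3) ge_one_powr_ge_zero[of "real N" a] mult_right_mono[of 1 "real N powr a" "G N"]
        by simp
    qed (use assms(3) in auto)
    then show ?thesis
      using B[of N] by simp
  qed
  then show ?thesis
    by (intro bdd_aboveI2) auto
qed

lemma powr_mult_decay_term_le:
  fixes G :: "nat \<Rightarrow> real"
  assumes "b > 1" "a > 0" "\<And>N. G N \<ge> 0" "m > 0" "N \<ge> 1"
    and tail: "\<And>N. N \<ge> N1 \<Longrightarrow> real N powr a * G N \<le> C"
  shows "real m powr a * (b powr (- real m / real N) * G N)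
    \<le> max (C * ((a / ln b) powr a * exp (- a)))
           (real m powr a * (b powr (- real m / real N1) * (\<Sum>k=1..N1. G k)))"
proof (cases "N \<ge> N1")
  case True
  have "0 \<le> C"
    using tail[OF True] assms(3)[of N] by (meson order.trans mult_nonneg_nonneg powr_ge_zero)
  have "real m powr a * (b powr (- real m / real N) * G N)
      = real N powr a * G N * decay_profile b a (real N / real m)"
    using assms by (intro powr_mult_decay_eq_decay_profile) auto
  also have "\<dots> \<le> C * ((a / ln b) powr a * exp (- a))"
    using assms True \<open>0 \<le> C\<close> by (intro mult_mono decay_profile_le) (auto simp: decay_profile_def)
  finally show ?thesis
    by simp
next
  case False
  have "b powr (- real m / real N) \<le> b powr (- real m / real N1)"
    using False assms by (intro powr_mono) (auto simp: frac_le)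
  moreover have "G N \<le> (\<Sum>k=1..N1. G k)"
    using False assms by (intro member_le_sum) auto
  ultimately have "b powr (- real m / real N) * G N \<le> b powr (- real m / real N1) * (\<Sum>k=1..N1. G k)"
    using assms(3) by (intro mult_mono) auto
  then have "real m powr a * (b powr (- real m / real N) * G N)
      \<le> real m powr a * (b powr (- real m / real N1) * (\<Sum>k=1..N1. G k))"
    by (rule mult_left_mono) simp
  then show ?thesis
    by (rule max.coboundedI2)
qed

lemma eventually_powr_mult_decay_SUP_less:
  fixes G :: "nat \<Rightarrow> real"
  assumes "b > 1" "a > 0" "\<And>N. G N \<ge> 0" and lim: "(\<lambda>N. real N powr a * G N) \<longlonglongrightarrow> K"
    and "y > K * ((a / ln b) powr a * exp (- a))"
  shows "\<forall>\<^sub>F m in sequentially. real m powr a * (SUP N\<in>{1..}. b powr (- real m / real N) * G N) < y"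
proof -
  define P where "P = (a / ln b) powr a * exp (- a)"
  have "P > 0" "K * P < y"
    using assms by (simp_all add: P_def)
  have "K \<ge> 0"
    using assms by (intro LIMSEQ_le_const[OF lim]) auto
  define C where "C = K + (y - K * P) / (2 * P)"
  have "K < C" "C * P < y"
    using \<open>K * P < y\<close> \<open>P > 0\<close> by (simp_all add: C_def field_simps)
  obtain N0 where "\<And>N. N \<ge> N0 \<Longrightarrow> real N powr a * G N \<le> C"
    using order_tendstoD(2)[OF lim \<open>K < C\<close>] unfolding eventually_sequentially by (meson less_imp_le)
  (* Suc N0 rather than N0: for N0 = 0 the exponent - m / N0 would be the junk value 0. *)
  then have tail: "\<And>N. N \<ge> Suc N0 \<Longrightarrow> real N powr a * G N \<le> C"
    by simp
  define M where "M = (\<Sum>k=1..Suc N0. G k)"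
  have "(\<lambda>m. real m powr a * (b powr (- real m / real (Suc N0)) * M)) \<longlonglongrightarrow> 0"
    using \<open>b > 1\<close> by real_asymp
  moreover have "0 < C * P"
    using \<open>K < C\<close> \<open>K \<ge> 0\<close> \<open>P > 0\<close> by simp
  then have "0 < y"
    using \<open>C * P < y\<close> by linarith
  ultimately have "\<forall>\<^sub>F m in sequentially. real m powr a * (b powr (- real m / real (Suc N0)) * M) < y"
    by (rule order_tendstoD(2))
  then show ?thesis
    using eventually_gt_at_top[of 0]
  proof eventually_elim
    case (elim m)
    define B where "B = max (C * P) (real m powr a * (b powr (- real m / real (Suc N0)) * M))"
    have "real m powr a * (b powr (- real m / real N) * G N) \<le> B" if "N \<ge> 1" for N
      unfolding B_def P_def M_def using assms elim that tail by (intro powr_mult_decay_term_le) auto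
    then have "(SUP N\<in>{1..}. b powr (- real m / real N) * G N) \<le> B / real m powr a"
      using elim by (intro cSUP_least) (auto simp: field_simps)
    then have "real m powr a * (SUP N\<in>{1..}. b powr (- real m / real N) * G N) \<le> B"
      using elim by (simp add: field_simps)
    also have "B < y"
      using elim \<open>C * P < y\<close> by (simp add: B_def)
    finally show ?case .
  qed
qed

lemma eventually_less_powr_mult_decay_SUP:
  fixes G :: "nat \<Rightarrow> real"
  assumes "b > 1" "a > 0" "\<And>N. G N \<ge> 0" and lim: "(\<lambda>N. real N powr a * G N) \<longlonglongrightarrow> K"
    and "y < K * ((a / ln b) powr a * exp (- a))"
  shows "\<forall>\<^sub>F m in sequentially. y < real m powr a * (SUP N\<in>{1..}. b powr (- real m / real N) * G N)"
proof -
  define x where "x = ln b / a"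
  have "x > 0"
    using assms by (simp add: x_def)
  define Nm where "Nm m = nat \<lceil>real m * x\<rceil>" for m
  have Nm_tendsto: "filterlim Nm sequentially sequentially" "(\<lambda>m. real (Nm m) / real m) \<longlonglongrightarrow> x"
    unfolding Nm_def using nat_ceiling_mult_tendsto[OF \<open>x > 0\<close>] by simp_all
  have "isCont (decay_profile b a) x"
    using \<open>x > 0\<close> \<open>b > 1\<close> unfolding decay_profile_def[abs_def] by (intro continuous_intros) auto
  then have "(\<lambda>m. real (Nm m) powr a * G (Nm m) * decay_profile b a (real (Nm m) / real m))
      \<longlonglongrightarrow> K * decay_profile b a x"
    by (intro tendsto_mult filterlim_compose[OF lim Nm_tendsto(1)] isCont_tendsto_compose[OF _ Nm_tendsto(2)])
  moreover have "decay_profile b a x = (a / ln b) powr a * exp (- a)"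
    unfolding x_def using assms(1,2) by (rule decay_profile_at_maximum)
  ultimately have "\<forall>\<^sub>F m in sequentially.
      y < real (Nm m) powr a * G (Nm m) * decay_profile b a (real (Nm m) / real m)"
    using assms(5) by (auto intro: order_tendstoD(1))
  then show ?thesis
    using eventually_gt_at_top[of 0]
  proof eventually_elim
    case (elim m)
    have "0 < real m * x"
      using elim \<open>x > 0\<close> by simp
    then have "Nm m \<ge> 1"
      unfolding Nm_def by linarith
    have "bdd_above ((\<lambda>N. b powr (- real m / real N) * G N) ` {1..})"
      using assms(1-4) by (intro bdd_above_decay_terms[where a = a]) (auto simp: convergent_def)
    then have "b powr (- real m / real (Nm m)) * G (Nm m) \<le> (SUP N\<in>{1..}. b powr (- real m / real N) * G N)"
      using \<open>Nm m \<ge> 1\<close> by (intro cSUP_upper) auto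
    then have "real m powr a * (b powr (- real m / real (Nm m)) * G (Nm m))
        \<le> real m powr a * (SUP N\<in>{1..}. b powr (- real m / real N) * G N)"
      by (rule mult_left_mono) simp
    moreover have "real m powr a * (b powr (- real m / real (Nm m)) * G (Nm m))
        = real (Nm m) powr a * G (Nm m) * decay_profile b a (real (Nm m) / real m)"
      using elim \<open>Nm m \<ge> 1\<close> by (intro powr_mult_decay_eq_decay_profile) auto
    ultimately show ?case
      using elim by linarith
  qed
qed

lemma powr_mult_decay_SUP_tendsto:
  fixes G :: "nat \<Rightarrow> real"
  assumes "b > 1" "a > 0" "\<And>N. G N \<ge> 0" "(\<lambda>N. real N powr a * G N) \<longlonglongrightarrow> K"
  shows "(\<lambda>m. real m powr a * (SUP N\<in>{1..}. b powr (- real m / real N) * G N))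
    \<longlonglongrightarrow> K * ((a / ln b) powr a * exp (- a))"
proof (rule order_tendstoI)
  show "\<forall>\<^sub>F m in sequentially. y < real m powr a * (SUP N\<in>{1..}. b powr (- real m / real N) * G N)"
    if "y < K * ((a / ln b) powr a * exp (- a))" for y
    using assms that by (rule eventually_less_powr_mult_decay_SUP)
  show "\<forall>\<^sub>F m in sequentially. real m powr a * (SUP N\<in>{1..}. b powr (- real m / real N) * G N) < y"
    if "y > K * ((a / ln b) powr a * exp (- a))" for y
    using assms that by (rule eventually_powr_mult_decay_SUP_less)
qed

lemma smallo_of_powr_mult_tendsto:
  fixes f :: "nat \<Rightarrow> real"
  assumes "(\<lambda>m. real m powr a * f m) \<longlonglongrightarrow> L"
  shows "(\<lambda>m. f m - L * real m powr (- a)) \<in> o(\<lambda>m. real m powr (- a))"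
proof (rule smalloI_tendsto)
  have "(\<lambda>m. real m powr a * f m - L) \<longlonglongrightarrow> 0"
    using tendsto_diff[OF assms tendsto_const[of L]] by simp
  then show "(\<lambda>m. (f m - L * real m powr (- a)) / real m powr (- a)) \<longlonglongrightarrow> 0"
    by (rule Lim_transform_eventually)
       (use eventually_gt_at_top[of 0] in \<open>eventually_elim, simp add: powr_minus field_simps\<close>)
  show "\<forall>\<^sub>F m in sequentially. real m powr (- a) \<noteq> 0"
    using eventually_gt_at_top[of 0] by eventually_elim simp
qed

theorem lemma4:
  fixes \<alpha>1 c1 :: real and lam :: "nat \<Rightarrow> real"
  assumes "\<alpha>1 > 0" and "c1 > 0"
    and "\<And>n. n \<ge> 1 \<Longrightarrow> lam n > 0"
    and "(\<lambda>n. lam n / (c1 * real n powr (- \<alpha>1))) \<longlonglongrightarrow> 1"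
  shows "(\<lambda>m. sup_geo lam m - c1 * (\<alpha>1 / ln 2) powr \<alpha>1 * real m powr (- \<alpha>1))
           \<in> o(\<lambda>m. real m powr (- \<alpha>1))"
proof (rule smallo_of_powr_mult_tendsto)
  define G where "G N = (\<Prod>n=1..N. lam n) powr (1 / real N)" for N
  have "(\<lambda>N. real N powr \<alpha>1 * G N) \<longlonglongrightarrow> c1 * exp \<alpha>1"
    unfolding G_def using assms(2-4) by (rule powr_mult_geometric_mean_tendsto)
  then have "(\<lambda>m. real m powr \<alpha>1 * (SUP N\<in>{1..}. 2 powr (- real m / real N) * G N))
      \<longlonglongrightarrow> c1 * exp \<alpha>1 * ((\<alpha>1 / ln 2) powr \<alpha>1 * exp (- \<alpha>1))"
    using assms(1) by (intro powr_mult_decay_SUP_tendsto) (auto simp: G_def)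
  also have "c1 * exp \<alpha>1 * ((\<alpha>1 / ln 2) powr \<alpha>1 * exp (- \<alpha>1)) = c1 * (\<alpha>1 / ln 2) powr \<alpha>1"
    by (simp add: exp_minus field_simps)
  finally show "(\<lambda>m. real m powr \<alpha>1 * sup_geo lam m) \<longlonglongrightarrow> c1 * (\<alpha>1 / ln 2) powr \<alpha>1"
    by (simp add: sup_geo_def G_def)
qed

end
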